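(* Let $\mathfrak g$ be a perfect Lie algebra (i.e. $[\mathfrak g,\mathfrak g]=\mathfrak g$), let $k\ge2$ be an integer and let $m\in\mathbb F$ with $m\ne0$ and $m\notin\{-1,-2,-3,\dots\}$. If a linear map $f:\mathfrak g\to\mathfrak g$ satisfies $$m\, f([x_1,\dots,x_k])+\sum_{i=2}^{k}[x_1,\dots,x_{i-1},f([x_i,\dots,x_k])]=0$$ for all $x_1,\dots,x_k\in\mathfrak g$, then $f=0$.
   Context: All Lie algebras are finite-dimensional over an algebraically closed field $\mathbb F$ of characteristic zero. For $x_1,\dots,x_{n}\in\mathfrak g$, $[x_1,\dots,x_{n}]$ denotes the right-nested bracket $[x_1,[x_2,[\dots,[x_{n-1},x_{n}]\dots]]]$, with $[x]=x$ for a single element; thus the term $i=k$ of the sum is $[x_1,\dots,x_{k-1},f(x_k)]$. *)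

theory Defs
  imports Main "HOL-Computational_Algebra.Polynomial"
begin

definition alg_closed_field :: "'k::field itself \<Rightarrow> bool" where
  "alg_closed_field _ \<longleftrightarrow> (\<forall>p :: 'k poly. 0 < degree p \<longrightarrow> (\<exists>x. poly p x = 0))"

definition lie_algebra :: "('k::field \<Rightarrow> 'v::ab_group_add \<Rightarrow> 'v) \<Rightarrow> ('v \<Rightarrow> 'v \<Rightarrow> 'v) \<Rightarrow> bool" where
  "lie_algebra sc br \<longleftrightarrow>
     vector_space sc \<and>
     (\<exists>B. finite B \<and> module.span sc B = UNIV) \<and>
     (\<forall>x. Vector_Spaces.linear sc sc (br x)) \<and>
     (\<forall>y. Vector_Spaces.linear sc sc (\<lambda>x. br x y)) \<and>
     (\<forall>x. br x x = 0) \<and>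
     (\<forall>x y z. br x (br y z) + br y (br z x) + br z (br x y) = 0)"

definition perfect_lie :: "('k::field \<Rightarrow> 'v::ab_group_add \<Rightarrow> 'v) \<Rightarrow> ('v \<Rightarrow> 'v \<Rightarrow> 'v) \<Rightarrow> bool" where
  "perfect_lie sc br \<longleftrightarrow> module.span sc {br x y | x y. True} = UNIV"

fun rnest :: "('v \<Rightarrow> 'v \<Rightarrow> 'v) \<Rightarrow> 'v list \<Rightarrow> 'v" where
  "rnest br [] = undefined"
| "rnest br [x] = x"
| "rnest br (x # y # ys) = br x (rnest br (y # ys))"

end

theory Submission
  imports Defs
begin

(*
  If a
  linear map f on g satisfies
      m f([x1,...,xk]) + sum_{i=2..k} [x1,...,x(i-1), f([xi,...,xk])] = 0,
  then f = 0.

  Writing nest P v = [p1,[p2,...,[pn,v]...]] for a list P = [p1,...,pn], the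
  hypothesis is the "nest identity" of arity n = k - 1:
      m f(nest P v) + tails_sum P v = 0   for all P of length n and all v.

  Expanding [a,[b,f d]] in two ways gives a
     cyclic relation among the three cyclic double brackets; for m <> -1 they
     coincide, and by Jacobi their sum is 0, so f vanishes on double brackets.
  5. Arity n >= 2:  taking v = pn shows that [y,f y] is central, so
     [x,f y] = [f x,y] modulo Z(g).  Then, modulo Z(g), the tail terms equal the
     "entry terms" (f applied to each pi); comparing three instances of the
     identity shows that f is a derivation modulo Z(g), whence the identity
     reads (m + n) f(nest P v) = 0 modulo Z(g).  So f maps into Z(g), the tail
     terms vanish, and m f(nest P v) = 0 forces f = 0.
  6. The theorem: the hypothesis is the nest identity of arity k - 1 and
     m + (k - 1) <> 0, so steps 4 and 5 apply.
*)

text \<open>The axioms of \<open>lie_algebra\<close> without finite dimensionality, over any field.\<close>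
locale lie_alg = vector_space sc
  for sc :: "'k::field \<Rightarrow> 'v::ab_group_add \<Rightarrow> 'v" +
  fixes br :: "'v \<Rightarrow> 'v \<Rightarrow> 'v"
  assumes br_linear_right: "Vector_Spaces.linear sc sc (br x)"
    and br_linear_left: "Vector_Spaces.linear sc sc (\<lambda>x. br x y)"
    and br_self: "br x x = 0"
    and jacobi: "br x (br y z) + br y (br z x) + br z (br x y) = 0"
begin

lemma br_hom_right: "module_hom sc sc (br x)"
  using br_linear_right by (rule module_hom_linearI)

lemma br_hom_left: "module_hom sc sc (\<lambda>x. br x y)"
  using br_linear_left by (rule module_hom_linearI)

lemma br_add_right: "br x (a + b) = br x a + br x b"
  by (rule module_hom.add[OF br_hom_right])

lemma br_scale_right: "br x (sc r a) = sc r (br x a)"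
  by (rule module_hom.scale[OF br_hom_right])

lemma br_zero_right [simp]: "br x 0 = 0"
  by (rule module_hom.zero[OF br_hom_right])

lemma br_minus_right: "br x (- a) = - br x a"
  by (rule module_hom.neg[OF br_hom_right])

lemma br_diff_right: "br x (a - b) = br x a - br x b"
  by (rule module_hom.diff[OF br_hom_right])

lemma br_sum_right: "br x (sum g A) = (\<Sum>i\<in>A. br x (g i))"
  by (rule module_hom.sum[OF br_hom_right])

lemma br_add_left: "br (a + b) y = br a y + br b y"
  using module_hom.add[OF br_hom_left] by simp

lemma br_minus_left: "br (- a) y = - br a y"
  using module_hom.neg[OF br_hom_left] by simp

lemma br_diff_left: "br (a - b) y = br a y - br b y"
  using module_hom.diff[OF br_hom_left] by simp

lemma br_anticomm: "br y x = - br x y"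
proof -
  have "br (x + y) (x + y) = br x y + br y x"
    by (subst br_add_left, subst br_add_right, subst br_add_right) (simp add: br_self)
  then have "br x y + br y x = 0" by (simp add: br_self)
  then show ?thesis by (rule minus_unique[symmetric])
qed

lemma br_leibniz: "br x (br y z) = br (br x y) z + br y (br x z)"
proof -
  have "br z (br x y) = - br x (br y z) - br y (br z x)"
    using jacobi[of x y z] by (simp add: eq_neg_iff_add_eq_0 algebra_simps)
  then show ?thesis
    by (simp add: br_anticomm[of "br x y" z] br_anticomm[of z x] br_minus_right)
qed

lemma linear_preimage_subspace:
  "Vector_Spaces.linear sc sc g \<Longrightarrow> subspace S \<Longrightarrow> subspace {u. g u \<in> S}"
  by (rule module_hom.subspace_linear_preimage[OF module_hom_linearI])

definition central :: "'v \<Rightarrow> bool" where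
  "central z \<longleftrightarrow> (\<forall>t. br t z = 0)"

lemma central_zero [simp]: "central 0"
  by (simp add: central_def)

lemma central_add: "central a \<Longrightarrow> central b \<Longrightarrow> central (a + b)"
  by (simp add: central_def br_add_right)

lemma central_minus: "central a \<Longrightarrow> central (- a)"
  by (simp add: central_def br_minus_right)

lemma central_diff: "central a \<Longrightarrow> central b \<Longrightarrow> central (a - b)"
  by (simp add: central_def br_diff_right)

lemma central_scale: "central a \<Longrightarrow> central (sc r a)"
  by (simp add: central_def br_scale_right)

lemma central_br_right: "central z \<Longrightarrow> br t z = 0"
  by (simp add: central_def)

lemma central_br_left: "central z \<Longrightarrow> br z t = 0"
  by (simp add: central_def br_anticomm[of z t])

lemma central_subspace: "subspace (Collect central)"
  by (auto simp: subspace_def central_add central_scale)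

text \<open>Most of the argument for arity \<open>\<ge> 2\<close> holds only up to central error terms.\<close>
definition cong_center :: "'v \<Rightarrow> 'v \<Rightarrow> bool" (infix \<open>\<approx>\<close> 50) where
  "a \<approx> b \<longleftrightarrow> central (a - b)"

lemma cong_refl [simp]: "a \<approx> a"
  by (simp add: cong_center_def)

lemma cong_zero_iff: "a \<approx> 0 \<longleftrightarrow> central a"
  by (simp add: cong_center_def)

lemma cong_sym: "a \<approx> b \<Longrightarrow> b \<approx> a"
  unfolding cong_center_def using central_minus by fastforce

lemma cong_trans [trans]: "a \<approx> b \<Longrightarrow> b \<approx> c \<Longrightarrow> a \<approx> c"
  unfolding cong_center_def using central_add by fastforce

lemma cong_add: "a \<approx> b \<Longrightarrow> c \<approx> d \<Longrightarrow> a + c \<approx> b + d"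
  unfolding cong_center_def using central_add by (fastforce simp: algebra_simps)

lemma cong_minus: "a \<approx> b \<Longrightarrow> - a \<approx> - b"
  unfolding cong_center_def using central_minus by (fastforce simp: algebra_simps)

lemma cong_diff: "a \<approx> b \<Longrightarrow> c \<approx> d \<Longrightarrow> a - c \<approx> b - d"
  using cong_add[OF _ cong_minus, of a b c d] by (simp only: diff_conv_add_uminus)

lemma cong_scale: "a \<approx> b \<Longrightarrow> sc r a \<approx> sc r b"
  unfolding cong_center_def using central_scale by (fastforce simp: scale_right_diff_distrib)

lemma cong_br_right: "a \<approx> b \<Longrightarrow> br t a = br t b"
  unfolding cong_center_def using central_br_right[of "a - b" t] by (simp add: br_diff_right)

lemma cong_br_left: "a \<approx> b \<Longrightarrow> br a t = br b t"
  unfolding cong_center_def using central_br_left[of "a - b" t] by (simp add: br_diff_left)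

abbreviation nest :: "'v list \<Rightarrow> 'v \<Rightarrow> 'v" where
  "nest P v \<equiv> foldr br P v"

lemma rnest_append: "rnest br (P @ [v]) = nest P v"
  by (induct P rule: induct_list012) auto

lemma nest_zero [simp]: "nest P 0 = 0"
  by (induct P) auto

lemma nest_add: "nest P (a + b) = nest P a + nest P b"
  by (induct P) (auto simp: br_add_right)

lemma nest_diff: "nest P (a - b) = nest P a - nest P b"
  by (induct P) (auto simp: br_diff_right)

end

section \<open>Perfect Lie algebras\<close>

locale perfect_lie_alg = lie_alg +
  assumes perfect: "span {br x y | x y. True} = UNIV"
begin

lemma perfect_induct:
  assumes "subspace S" and "\<And>x y. br x y \<in> S"
  shows "v \<in> S"
proof -
  have "v \<in> span {br x y | x y. True}" using perfect by simp
  then show ?thesis by (rule span_subspace_induct) (use assms in auto)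
qed

lemma nests_span:
  assumes "subspace S" and "\<And>P v. length P = n \<Longrightarrow> nest P v \<in> S"
  shows "u \<in> S"
  using assms
proof (induct n arbitrary: S u)
  case 0
  then show ?case using "0.prems"(2)[of "[]"] by simp
next
  case (Suc n)
  have "br y w \<in> S" for y w
  proof -
    have "w \<in> {w. br y w \<in> S}"
    proof (rule Suc.hyps)
      show "subspace {w. br y w \<in> S}"
        using br_linear_right Suc.prems(1) by (rule linear_preimage_subspace)
      show "nest P v \<in> {w. br y w \<in> S}" if "length P = n" for P v
        using Suc.prems(2)[of "y # P" v] that by simp
    qed
    then show ?thesis by simp
  qed
  then show ?case by (rule perfect_induct[OF Suc.prems(1)])
qed

text \<open>An element whose nests of a fixed length are all central is itself central:
  if \<open>[y,a]\<close> is central for all \<open>y\<close>, then by Jacobi \<open>[[x,y],a] = 0\<close>, and brackets span.\<close>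
lemma central_of_central_nests:
  "(\<And>Q. length Q = n \<Longrightarrow> central (nest Q a)) \<Longrightarrow> central a"
proof (induct n arbitrary: a)
  case 0
  then show ?case using "0"[of "[]"] by simp
next
  case (Suc n)
  have bracket_central: "central (br y a)" for y
  proof (rule Suc.hyps)
    show "central (nest Q (br y a))" if "length Q = n" for Q
      using Suc.prems[of "Q @ [y]"] that by simp
  qed
  have "t \<in> {t. br t a = 0}" for t
  proof (rule perfect_induct)
    show "subspace {t. br t a = 0}"
      using module_hom.subspace_kernel[OF br_hom_left] by simp
    show "br x y \<in> {t. br t a = 0}" for x y
      using br_leibniz[of x y a] bracket_central[of x] bracket_central[of y]
      by (simp add: central_br_right)
  qed
  then show ?case by (simp add: central_def)
qed

end

lemma map_positions:
  fixes L :: "'a list"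
  defines "x \<equiv> \<lambda>i. L ! (i - 1)"
  assumes "length L = k"
  shows "map x [1..<k+1] = L"
    and "1 \<le> i \<Longrightarrow> i \<le> k + 1 \<Longrightarrow> map x [1..<i] = take (i - 1) L"
    and "1 \<le> i \<Longrightarrow> i \<le> k + 1 \<Longrightarrow> map x [i..<k+1] = drop (i - 1) L"
proof -
  have "[1..<k+1] = map Suc [0..<k]"
    by (simp del: upt_Suc add: map_Suc_upt)
  then show all: "map x [1..<k+1] = L"
    by (simp del: upt_Suc add: x_def comp_def map_nth assms(2)[symmetric])
  assume "1 \<le> i" and "i \<le> k + 1"
  then have "[1..<i] = take (i - 1) [1..<k+1]" and "[i..<k+1] = drop (i - 1) [1..<k+1]"
    by (simp_all del: upt_Suc)
  then show "map x [1..<i] = take (i - 1) L" and "map x [i..<k+1] = drop (i - 1) L"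
    by (simp_all only: take_map[symmetric] drop_map[symmetric] all)
qed

locale lie_alg_map = perfect_lie_alg sc br
  for sc :: "'k::field_char_0 \<Rightarrow> 'v::ab_group_add \<Rightarrow> 'v" and br +
  fixes f :: "'v \<Rightarrow> 'v"
  assumes f_linear: "Vector_Spaces.linear sc sc f"
begin

lemma f_hom: "module_hom sc sc f"
  using f_linear by (rule module_hom_linearI)

lemma f_add: "f (a + b) = f a + f b"
  by (rule module_hom.add[OF f_hom])

lemma f_scale: "f (sc r a) = sc r (f a)"
  by (rule module_hom.scale[OF f_hom])

lemma f_zero [simp]: "f 0 = 0"
  by (rule module_hom.zero[OF f_hom])

lemma f_minus: "f (- a) = - f a"
  by (rule module_hom.neg[OF f_hom])

text \<open>Division by 3, available in characteristic zero.\<close>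
lemma scale_third_triple: "sc (1/3) (x + x + x) = x"
proof -
  have "x + x + x = sc (1 + 1 + 1) x"
    by (simp only: scale_left_distrib scale_one)
  then show ?thesis by simp
qed

lemma f_zero_of_zero_on_nests:
  assumes "\<And>P v. length P = n \<Longrightarrow> f (nest P v) = 0"
  shows "f u = 0"
proof -
  have "u \<in> {u. f u = 0}"
    by (rule nests_span[where n = n, OF module_hom.subspace_kernel[OF f_hom]]) (simp add: assms)
  then show ?thesis by simp
qed

lemma f_central_of_central_on_nests:
  assumes "\<And>P v. length P = n \<Longrightarrow> central (f (nest P v))"
  shows "central (f u)"
proof -
  have "u \<in> {u. f u \<in> Collect central}"
    by (rule nests_span[where n = n, OF linear_preimage_subspace[OF f_linear central_subspace]])
      (simp add: assms)
  then show ?thesis by simp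
qed

text \<open>\<open>tails_sum [p\<^sub>1, \<dots>, p\<^sub>n] v = \<Sum>\<^sub>j [p\<^sub>1, \<dots>, p\<^sub>j, f (nest [p\<^sub>j\<^sub>+\<^sub>1, \<dots>, p\<^sub>n] v)]\<close>,
  the sum occurring in the hypothesis, computed by recursion on the list.\<close>
fun tails_sum :: "'v list \<Rightarrow> 'v \<Rightarrow> 'v" where
  "tails_sum [] v = 0"
| "tails_sum (p # P) v = br p (f (nest P v) + tails_sum P v)"

text \<open>The identity of the theorem for lists of length \<open>n = k - 1\<close>.\<close>
definition nest_identity :: "'k \<Rightarrow> nat \<Rightarrow> bool" where
  "nest_identity m n \<longleftrightarrow>
     (\<forall>P v. length P = n \<longrightarrow> sc m (f (nest P v)) + tails_sum P v = 0)"

lemma nest_identityD: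
  "nest_identity m n \<Longrightarrow> length P = n \<Longrightarrow> sc m (f (nest P v)) + tails_sum P v = 0"
  by (simp add: nest_identity_def)

lemma tails_sum_explicit:
  "(\<Sum>j\<in>{1..length P}. nest (take j P) (f (nest (drop j P) v))) = tails_sum P v"
proof (induct P)
  case Nil
  then show ?case by simp
next
  case (Cons p P)
  let ?term = "\<lambda>j. nest (take j (p # P)) (f (nest (drop j (p # P)) v))"
  have "(\<Sum>j\<in>{1..length (p # P)}. ?term j) = ?term 1 + (\<Sum>j\<in>{Suc 1..Suc (length P)}. ?term j)"
    by (simp only: length_Cons sum.atLeast_Suc_atMost[of 1 "Suc (length P)"])
  also have "(\<Sum>j\<in>{Suc 1..Suc (length P)}. ?term j)
      = (\<Sum>j\<in>{1..length P}. br p (nest (take j P) (f (nest (drop j P) v))))"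
    by (simp only: sum.shift_bounds_cl_Suc_ivl) simp
  also have "\<dots> = br p (tails_sum P v)"
    by (simp only: br_sum_right[symmetric] Cons)
  finally show ?case by (simp add: br_add_right)
qed

lemma nest_identity_of_hypothesis:
  assumes hyp: "\<forall>x :: nat \<Rightarrow> 'v.
           sc m (f (rnest br (map x [1..<k+1])))
           + (\<Sum>i\<in>{2..k}. rnest br (map x [1..<i] @ [f (rnest br (map x [i..<k+1]))])) = 0"
    and k: "k \<ge> 2"
  shows "nest_identity m (k - 1)"
  unfolding nest_identity_def
proof (intro allI impI)
  fix P :: "'v list" and v assume len: "length P = k - 1"
  define x where "x = (\<lambda>i. (P @ [v]) ! (i - 1))"
  have length: "length (P @ [v]) = k"
    using len k by simp
  have all: "map x [1..<k+1] = P @ [v]"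
    using map_positions(1)[OF length] by (simp add: x_def)
  have heads: "map x [1..<i] = take (i - 1) P" and tails: "map x [i..<k+1] = drop (i - 1) P @ [v]"
    if "2 \<le> i" "i \<le> k" for i
    using map_positions(2,3)[OF length, of i] that len by (simp_all add: x_def)
  have "(\<Sum>i\<in>{2..k}. rnest br (map x [1..<i] @ [f (rnest br (map x [i..<k+1]))]))
      = (\<Sum>i\<in>{2..k}. nest (take (i - 1) P) (f (nest (drop (i - 1) P) v)))"
  proof (rule sum.cong[OF refl])
    fix i assume "i \<in> {2..k}"
    then have "2 \<le> i" "i \<le> k" by simp_all
    then show "rnest br (map x [1..<i] @ [f (rnest br (map x [i..<k+1]))])
        = nest (take (i - 1) P) (f (nest (drop (i - 1) P) v))"
      by (simp only: heads tails rnest_append)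
  qed
  also have "\<dots> = (\<Sum>i\<in>{Suc 1..Suc (k - 1)}. nest (take (i - 1) P) (f (nest (drop (i - 1) P) v)))"
    using k by (simp add: Suc_diff_Suc numeral_2_eq_2)
  also have "\<dots> = tails_sum P v"
    by (simp only: sum.shift_bounds_cl_Suc_ivl len[symmetric] tails_sum_explicit[symmetric]) simp
  finally have "(\<Sum>i\<in>{2..k}. rnest br (map x [1..<i] @ [f (rnest br (map x [i..<k+1]))]))
      = tails_sum P v" .
  moreover have "rnest br (map x [1..<k+1]) = nest P v"
    by (simp only: all rnest_append)
  ultimately show "sc m (f (nest P v)) + tails_sum P v = 0"
    using hyp[rule_format, of x] by simp
qed

subsection \<open>Arity one\<close>

text \<open>For \<open>k = 2\<close> the identity reads \<open>m f[x,y] = -[x, f y]\<close>.  Expanding the double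
  brackets \<open>[a,[b,f d]]\<close> in two ways yields a cyclic linear relation among them.\<close>
context
  fixes m :: 'k
  assumes arity_one: "\<And>x y. sc m (f (br x y)) = - br x (f y)"
begin

lemma arity_one_skew: "br y (f x) = - br x (f y)"
proof -
  have self: "br y (f y) = 0" for y
    using arity_one[of y y] by (simp add: br_self f_scale)
  have "br (x + y) (f (x + y)) = br x (f x) + br x (f y) + br y (f x) + br y (f y)"
    by (simp add: f_add br_add_left br_add_right algebra_simps)
  then have "br x (f y) + br y (f x) = 0" by (simp add: self)
  then show ?thesis by (rule minus_unique[symmetric])
qed

lemma arity_one_double: "sc m (sc m (f (br a (br b d)))) = br a (br b (f d))"
proof -
  have "sc m (sc m (f (br a (br b d)))) = sc m (- br a (f (br b d)))"
    by (simp only: arity_one)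
  also have "\<dots> = - br a (sc m (f (br b d)))"
    by (simp add: br_scale_right)
  also have "\<dots> = - br a (- br b (f d))"
    by (simp only: arity_one)
  finally show ?thesis by (simp add: br_minus_right)
qed

lemma arity_one_cyclic:
  "br a (br b (f d)) = sc m (br d (br a (f b)) + br b (br d (f a)))"
proof -
  have f_outer: "sc m (f (br a w)) = - br (f a) w" for w
    using arity_one[of a w] arity_one_skew[of a w] br_anticomm[of "f a" w] by simp
  have f_inner: "br (f a) (br b d) = - br d (br a (f b)) - br b (br d (f a))"
  proof -
    have "br (f a) (br b d) = br (br (f a) b) d + br b (br (f a) d)"
      by (rule br_leibniz)
    also have "br (br (f a) b) d = br d (br b (f a))"
      by (simp add: br_anticomm[of "f a" b] br_minus_left br_anticomm[of "br b (f a)" d])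
    also have "br b (f a) = - br a (f b)"
      by (rule arity_one_skew)
    also have "br b (br (f a) d) = br b (br a (f d))"
      by (simp add: br_anticomm[of "f a" d] arity_one_skew[of d a] br_minus_right)
    also have "br a (f d) = - br d (f a)"
      by (rule arity_one_skew)
    finally show ?thesis by (simp add: br_minus_right)
  qed
  have "br a (br b (f d)) = sc m (sc m (f (br a (br b d))))"
    by (rule arity_one_double[symmetric])
  also have "\<dots> = sc m (- (- br d (br a (f b)) - br b (br d (f a))))"
    by (simp only: f_outer f_inner)
  finally show ?thesis by (simp add: algebra_simps)
qed

text \<open>If \<open>m \<noteq> -1\<close>, the cyclic relation makes the three cyclic double brackets equal;
  by Jacobi their sum vanishes, so each is zero.\<close>
lemma arity_one_double_zero:
  assumes m1: "m + 1 \<noteq> 0"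
  shows "br a (br b (f d)) = 0"
proof -
  let ?A = "br a (br b (f d))" and ?B = "br b (br d (f a))" and ?C = "br d (br a (f b))"
  have equal: "x = y" if rx: "x = sc m (z + y)" and ry: "y = sc m (x + z)" for x y z
  proof -
    have "sc (m + 1) (x - y) = sc m (x - y) + (x - y)"
      by (simp add: scale_left_distrib)
    also have "sc m (x - y) = y - x"
      by (subst (2) ry, subst (2) rx) (simp add: scale_right_diff_distrib[symmetric])
    finally have "sc (m + 1) (x - y) = 0" by simp
    then show ?thesis using m1 by simp
  qed
  have AB: "?A = ?B"
    using arity_one_cyclic[of a b d] arity_one_cyclic[of b d a] by (rule equal)
  have BC: "?B = ?C"
    using arity_one_cyclic[of b d a] arity_one_cyclic[of d a b] by (rule equal)
  have "?A + ?B + ?C = sc m (sc m (f (br a (br b d) + br b (br d a) + br d (br a b))))"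
    by (simp add: arity_one_double[symmetric] f_add scale_right_distrib)
  also have "\<dots> = 0" by (simp add: jacobi)
  finally have "?A + ?A + ?A = 0" using AB BC by simp
  then have "sc (1/3) (?A + ?A + ?A) = 0" by simp
  then show ?thesis by (simp only: scale_third_triple)
qed

end

text \<open>Since double brackets span, \<open>m\<^sup>2 f\<close> and hence \<open>f\<close> vanishes.\<close>
lemma arity_one_zero:
  assumes "nest_identity m 1" and m0: "m \<noteq> 0" and m1: "m + 1 \<noteq> 0"
  shows "f u = 0"
proof -
  have arity_one: "sc m (f (br x y)) = - br x (f y)" for x y
    using nest_identityD[OF assms(1), of "[x]" y] by (simp add: eq_neg_iff_add_eq_0)
  show ?thesis
  proof (rule f_zero_of_zero_on_nests[of 2])
    fix P :: "'v list" and v assume "length P = 2"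
    then obtain a b where P: "P = [a, b]"
      by (metis One_nat_def Suc_1 length_0_conv length_Suc_conv)
    have "sc m (sc m (f (br a (br b v)))) = 0"
      using arity_one_double[OF arity_one] arity_one_double_zero[OF arity_one m1] by simp
    then show "f (nest P v) = 0" using m0 P by simp
  qed
qed

subsection \<open>Arity at least two: first consequences\<close>

text \<open>\<open>entries_sum [p\<^sub>1, \<dots>, p\<^sub>n] v = \<Sum>\<^sub>j [p\<^sub>1, \<dots>, f p\<^sub>j, \<dots>, p\<^sub>n, v]\<close>: \<open>f\<close> applied to each
  entry of the nest.  For a derivation this would equal \<open>f (nest P v) - nest P (f v)\<close>.\<close>
fun entries_sum :: "'v list \<Rightarrow> 'v \<Rightarrow> 'v" where
  "entries_sum [] v = 0"
| "entries_sum (p # P) v = br (f p) (nest P v) + br p (entries_sum P v)"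

lemma entries_sum_add: "entries_sum P (a + b) = entries_sum P a + entries_sum P b"
  by (induct P) (auto simp: nest_add br_add_right)

lemma entries_sum_append:
  "entries_sum (R @ Q) v = entries_sum R (nest Q v) + nest R (entries_sum Q v)"
  by (induct R) (auto simp: br_add_right)

text \<open>Putting \<open>v = y\<close> as the last entry kills every term but \<open>nest Q [y, f y]\<close>, so the
  self-brackets \<open>[y, f y]\<close> are central.\<close>
lemma self_bracket_central:
  assumes "nest_identity m (Suc n)"
  shows "central (br y (f y))"
proof (rule central_of_central_nests)
  have last_entry: "tails_sum (Q @ [y]) y = nest Q (br y (f y))" for Q
    by (induct Q) (auto simp: br_self)
  fix Q :: "'v list" assume "length Q = n"
  then have "sc m (f (nest (Q @ [y]) y)) + tails_sum (Q @ [y]) y = 0"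
    by (intro nest_identityD[OF assms]) simp
  then show "central (nest Q (br y (f y)))"
    by (simp add: last_entry br_self)
qed

text \<open>Polarising the central self-brackets: \<open>[x, f y] = [f x, y]\<close> modulo the centre.\<close>
lemma symmetric_mod_center:
  assumes "\<And>y. central (br y (f y))"
  shows "br x (f y) \<approx> br (f x) y"
proof -
  have "br (x + y) (f (x + y)) = br x (f x) + br x (f y) + br y (f x) + br y (f y)"
    by (simp add: f_add br_add_left br_add_right algebra_simps)
  then have "br x (f y) + br y (f x)
      = br (x + y) (f (x + y)) - br x (f x) - br y (f y)"
    by (simp add: algebra_simps)
  then have "central (br x (f y) + br y (f x))"
    using assms by (simp add: central_diff)
  then show ?thesis
    by (simp add: cong_center_def br_anticomm[of "f x" y])
qed

lemma tails_sum_central_image: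
  assumes "\<And>u. central (f u)"
  shows "tails_sum P v = 0"
  by (induct P) (auto simp: br_add_right central_br_right assms)

end

section \<open>Maps symmetric modulo the centre\<close>

text \<open>The setting reached after \<open>symmetric_mod_center\<close>.  The goal of this section is that
  \<open>f\<close> is then a derivation modulo the centre, given the nest identity.\<close>
locale lie_alg_map_sym = lie_alg_map sc br f
  for sc :: "'k::field_char_0 \<Rightarrow> 'v::ab_group_add \<Rightarrow> 'v" and br f +
  assumes f_sym: "br x (f y) \<approx> br (f x) y"
begin

lemma f_sym': "br (f x) y \<approx> br x (f y)"
  by (rule cong_sym[OF f_sym])

lemma tails_cong_entries: "tails_sum P v \<approx> entries_sum P v"
proof (induct P)
  case Nil
  then show ?case by simp
next
  case (Cons p P)
  have "tails_sum (p # P) v = br p (f (nest P v)) + br p (entries_sum P v)"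
    using cong_br_right[OF Cons] by (simp add: br_add_right)
  also have "\<dots> \<approx> br (f p) (nest P v) + br p (entries_sum P v)"
    by (intro cong_add f_sym cong_refl)
  finally show ?case by simp
qed

definition defect :: "'v \<Rightarrow> 'v \<Rightarrow> 'v" where
  "defect x y = f (br x y) - br x (f y)"

definition ad_defect :: "'v \<Rightarrow> 'v \<Rightarrow> 'v \<Rightarrow> 'v" where
  "ad_defect z x y = br z (defect x y)"

lemma defect_anti: "defect y x \<approx> - defect x y"
proof -
  have "defect y x = - f (br x y) - br y (f x)"
    by (simp add: defect_def br_anticomm[of x y] f_minus)
  also have "\<dots> \<approx> - f (br x y) - br (f y) x"
    by (intro cong_diff cong_refl f_sym)
  also have "\<dots> = - defect x y"
    by (simp add: defect_def br_anticomm[of "f y" x])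
  finally show ?thesis .
qed

lemma ad_defect_anti: "ad_defect z y x = - ad_defect z x y"
  unfolding ad_defect_def using cong_br_right[OF defect_anti, of z y x]
  by (simp add: br_minus_right)

lemma ad_defect_cyclic: "ad_defect z x y \<approx> ad_defect y z x"
proof -
  have outer: "br z (f (br x y)) \<approx> br (br z (f x)) y + br x (br z (f y))"
  proof -
    have "br z (f (br x y)) \<approx> br (f z) (br x y)" by (rule f_sym)
    also have "\<dots> = br (br (f z) x) y + br x (br (f z) y)" by (rule br_leibniz)
    also have "br (br (f z) x) y = br (br z (f x)) y"
    proof (rule cong_br_left)
      have "br (f z) x = - br x (f z)" by (rule br_anticomm)
      also have "\<dots> \<approx> - br (f x) z" by (intro cong_minus f_sym)
      also have "\<dots> = br z (f x)" by (simp add: br_anticomm[of "f x" z])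
      finally show "br (f z) x \<approx> br z (f x)" .
    qed
    also have "br x (br (f z) y) = br x (br z (f y))" by (rule cong_br_right[OF f_sym'])
    finally show ?thesis .
  qed
  have inner: "br z (br x (f y)) \<approx> br (f (br z x)) y + br x (br z (f y))"
  proof -
    have "br z (br x (f y)) = br (br z x) (f y) + br x (br z (f y))" by (rule br_leibniz)
    also have "\<dots> \<approx> br (f (br z x)) y + br x (br z (f y))" by (intro cong_add f_sym cong_refl)
    finally show ?thesis .
  qed
  have "ad_defect z x y = br z (f (br x y)) - br z (br x (f y))"
    by (simp add: ad_defect_def defect_def br_diff_right)
  also have "\<dots> \<approx> (br (br z (f x)) y + br x (br z (f y))) - (br (f (br z x)) y + br x (br z (f y)))"
    by (intro cong_diff outer inner)
  also have "\<dots> = br (br z (f x) - f (br z x)) y"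
    by (simp add: br_diff_left)
  also have "\<dots> = ad_defect y z x"
    by (simp only: ad_defect_def defect_def br_anticomm[of "br z (f x) - f (br z x)" y]
        br_minus_right[symmetric] minus_diff_eq)
  finally show ?thesis .
qed

text \<open>The combination of three instances of the identity (with the last entries \<open>[p,q,[a,b]]\<close>,
  \<open>[q,p,[a,b]]\<close> and \<open>[[p,q],a,b]\<close>) in which the \<open>f(nest)\<close> terms cancel by Jacobi.\<close>
definition three_term :: "'v \<Rightarrow> 'v \<Rightarrow> 'v \<Rightarrow> 'v \<Rightarrow> 'v" where
  "three_term p q a b =
     entries_sum [p, q] (br a b) - entries_sum [q, p] (br a b) - entries_sum [br p q, a] b"

lemma bracket_f_right_cong:
  "br (br p (f q)) w \<approx> br (br p q) (f w) - ad_defect q p w"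
proof -
  have "br (br p (f q)) w = br p (br (f q) w) - br (f q) (br p w)"
    by (simp add: br_leibniz[of p "f q" w])
  also have "br p (br (f q) w) = br p (br q (f w))"
    by (rule cong_br_right[OF f_sym'])
  also have "br p (br q (f w)) - br (f q) (br p w) \<approx> br p (br q (f w)) - br q (f (br p w))"
    by (intro cong_diff cong_refl f_sym')
  also have "br q (f (br p w)) = ad_defect q p w + br q (br p (f w))"
    by (simp add: ad_defect_def defect_def br_diff_right)
  also have "br p (br q (f w)) - (ad_defect q p w + br q (br p (f w)))
      = br (br p q) (f w) - ad_defect q p w"
    by (simp add: br_leibniz[of p q "f w"])
  finally show ?thesis .
qed

lemma entries_sum_two_cong:
  "entries_sum [c, a] b \<approx> br c (f (br a b)) + (br c (f (br a b)) - ad_defect c a b)"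
proof -
  have "entries_sum [c, a] b = br (f c) (br a b) + br c (br (f a) b)"
    by simp
  also have "\<dots> \<approx> br c (f (br a b)) + br c (br (f a) b)"
    by (intro cong_add f_sym' cong_refl)
  also have "br c (br (f a) b) = br c (br a (f b))"
    by (rule cong_br_right[OF f_sym'])
  also have "\<dots> = br c (f (br a b)) - ad_defect c a b"
    by (simp add: ad_defect_def defect_def br_diff_right)
  finally show ?thesis .
qed

lemma three_term_cong:
  "three_term p q a b \<approx> ad_defect (br p q) a b - (ad_defect q p (br a b) + ad_defect q p (br a b))"
proof -
  define w where "w = br a b"
  have "entries_sum [p, q] w - entries_sum [q, p] w = br (br (f p) q) w + br (br p (f q)) w"
    by (simp add: br_leibniz[of "f p" q w] br_leibniz[of p "f q" w])
  also have "br (br (f p) q) w = br (br p (f q)) w"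
    by (rule cong_br_left[OF f_sym'])
  finally have "three_term p q a b
      = (br (br p (f q)) w + br (br p (f q)) w) - entries_sum [br p q, a] b"
    by (simp add: three_term_def w_def)
  also have "\<dots> \<approx> ((br (br p q) (f w) - ad_defect q p w) + (br (br p q) (f w) - ad_defect q p w))
       - (br (br p q) (f w) + (br (br p q) (f w) - ad_defect (br p q) a b))"
    unfolding w_def by (intro cong_diff cong_add bracket_f_right_cong entries_sum_two_cong)
  also have "\<dots> = ad_defect (br p q) a b - (ad_defect q p (br a b) + ad_defect q p (br a b))"
    by (simp add: w_def algebra_simps)
  finally show ?thesis .
qed

text \<open>If all three-term combinations are central, then by \<open>three_term_cong\<close> and the
  symmetries of \<open>ad_defect\<close>, \<open>x = [[p,q], defect a b]\<close> and \<open>y = [[a,b], defect p q]\<close> satisfy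
  \<open>x \<approx> -2y\<close> and \<open>y \<approx> -2x\<close>; hence \<open>3x \<approx> 0\<close>.\<close>
lemma ad_defect_bracket_central:
  assumes three_term_central: "\<And>p q a b. central (three_term p q a b)"
  shows "central (ad_defect (br p q) a b)"
proof -
  have rel: "ad_defect (br p q) a b \<approx> - ad_defect (br a b) p q - ad_defect (br a b) p q"
    for p q a b
  proof -
    have "ad_defect (br p q) a b \<approx> ad_defect q p (br a b) + ad_defect q p (br a b)"
      using cong_trans[OF cong_sym[OF three_term_cong] three_term_central[folded cong_zero_iff]]
      by (simp add: cong_center_def)
    also have "\<dots> \<approx> ad_defect (br a b) q p + ad_defect (br a b) q p"
      by (intro cong_add ad_defect_cyclic)
    also have "ad_defect (br a b) q p = - ad_defect (br a b) p q"
      by (rule ad_defect_anti)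
    finally show ?thesis by simp
  qed
  let ?x = "ad_defect (br p q) a b"
  have "?x \<approx> - (- ?x - ?x) - (- ?x - ?x)"
    using rel[of p q a b] cong_diff[OF cong_minus[OF rel[of a b p q]] rel[of a b p q]]
    by (rule cong_trans)
  then have "central (- (?x - (- (- ?x - ?x) - (- ?x - ?x))))"
    unfolding cong_center_def by (rule central_minus)
  moreover have "- (?x - (- (- ?x - ?x) - (- ?x - ?x))) = ?x + ?x + ?x"
    by (simp add: algebra_simps)
  ultimately have "central (?x + ?x + ?x)" by metis
  then have "central (sc (1/3) (?x + ?x + ?x))"
    by (rule central_scale)
  then show ?thesis by (simp only: scale_third_triple)
qed

text \<open>Since brackets span, \<open>[z, defect a b]\<close> is central for all \<open>z\<close>, so \<open>defect a b\<close> is.\<close>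
lemma defect_central_of_three_term:
  assumes "\<And>p q a b. central (three_term p q a b)"
  shows "central (defect a b)"
proof -
  have "z \<in> {z. br z (defect a b) \<in> Collect central}" for z
  proof (rule perfect_induct)
    show "subspace {z. br z (defect a b) \<in> Collect central}"
      using br_linear_left central_subspace by (rule linear_preimage_subspace)
    show "br x y \<in> {z. br z (defect a b) \<in> Collect central}" for x y
      using ad_defect_bracket_central[OF assms, of x y] by (simp add: ad_defect_def)
  qed
  then have bracket_defect_central: "central (br z (defect a b))" for z by simp
  show ?thesis
  proof (rule central_of_central_nests[of 1])
    fix Q :: "'v list" assume "length Q = 1"
    then obtain z where "Q = [z]" by (cases Q) auto
    then show "central (nest Q (defect a b))" using bracket_defect_central[of z] by simp
  qed
qed

lemma entries_sum_cong:
  assumes defect_central: "\<And>a b. central (defect a b)"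
  shows "entries_sum P v \<approx> sc (of_nat (length P)) (f (nest P v))"
proof (induct P)
  case Nil
  then show ?case by simp
next
  case (Cons p P)
  have commute: "br p (f u) \<approx> f (br p u)" for u
    using central_minus[OF defect_central[of p u]] by (simp add: cong_center_def defect_def)
  have "entries_sum (p # P) v
      = br (f p) (nest P v) + sc (of_nat (length P)) (br p (f (nest P v)))"
    using cong_br_right[OF Cons] by (simp add: br_scale_right)
  also have "\<dots> \<approx> f (br p (nest P v)) + sc (of_nat (length P)) (f (br p (nest P v)))"
    by (intro cong_add cong_scale commute cong_trans[OF f_sym' commute])
  also have "\<dots> = sc (of_nat (length (p # P))) (f (nest (p # P) v))"
    by (simp add: scale_left_distrib)
  finally show ?case .
qed

context
  fixes m :: 'k and n :: nat
  assumes entries_identity: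
    "\<And>P v. length P = Suc (Suc n) \<Longrightarrow> central (sc m (f (nest P v)) + entries_sum P v)"
begin

lemma three_term_central: "central (three_term p q a b)"
proof (rule central_of_central_nests[of n])
  fix R :: "'v list" assume len: "length R = n"
  let ?E = "\<lambda>P v. sc m (f (nest P v)) + entries_sum P v"
  have "?E (R @ [p, q]) (br a b) - ?E (R @ [q, p]) (br a b) - ?E (R @ [br p q, a]) b
      = nest R (three_term p q a b)"
    using br_leibniz[of p q "br a b"]
    by (simp add: entries_sum_append nest_add f_add entries_sum_add scale_right_distrib
        nest_diff three_term_def)
  moreover have "central (?E (R @ [p, q]) (br a b) - ?E (R @ [q, p]) (br a b)
      - ?E (R @ [br p q, a]) b)"
    using len by (intro central_diff entries_identity) simp_all
  ultimately show "central (nest R (three_term p q a b))" by simp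
qed

lemma f_nest_central:
  assumes mn: "m + of_nat (Suc (Suc n)) \<noteq> 0" and len: "length P = Suc (Suc n)"
  shows "central (f (nest P v))"
proof -
  let ?E = "sc m (f (nest P v)) + entries_sum P v" and ?c = "m + of_nat (Suc (Suc n))"
  have "?E \<approx> sc m (f (nest P v)) + sc (of_nat (length P)) (f (nest P v))"
    by (intro cong_add cong_refl entries_sum_cong defect_central_of_three_term
        three_term_central)
  also have "\<dots> = sc ?c (f (nest P v))"
    using len by (simp add: scale_left_distrib)
  finally have "central (?E - sc ?c (f (nest P v)))"
    unfolding cong_center_def .
  with entries_identity[OF len] have "central (?E - (?E - sc ?c (f (nest P v))))"
    by (rule central_diff)
  then have "central (sc ?c (f (nest P v)))"
    by simp
  then have "central (sc (inverse ?c) (sc ?c (f (nest P v))))"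
    by (rule central_scale)
  then show ?thesis using mn by simp
qed

end

end

context lie_alg_map
begin

text \<open>Arity \<open>n + 2\<close>: \<open>f\<close> is symmetric modulo the centre, hence a derivation modulo the
  centre, hence maps into the centre; then all tail terms vanish and \<open>m f = 0\<close> on nests.\<close>
lemma arity_ge_two_zero:
  assumes identity: "nest_identity m (Suc (Suc n))"
    and m0: "m \<noteq> 0" and mn: "m + of_nat (Suc (Suc n)) \<noteq> 0"
  shows "f u = 0"
proof -
  interpret sym: lie_alg_map_sym sc br f
  proof (rule lie_alg_map_sym.intro[OF lie_alg_map_axioms], unfold_locales)
    show "br x (f y) \<approx> br (f x) y" for x y
      by (rule symmetric_mod_center[OF self_bracket_central[OF identity]])
  qed
  have entries_identity: "central (sc m (f (nest P v)) + entries_sum P v)"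
    if "length P = Suc (Suc n)" for P v
  proof -
    have "sc m (f (nest P v)) + entries_sum P v \<approx> sc m (f (nest P v)) + tails_sum P v"
      by (intro cong_add cong_refl cong_sym[OF sym.tails_cong_entries])
    then show ?thesis
      using nest_identityD[OF identity that] by (simp add: cong_center_def)
  qed
  have "central (f w)" for w
    using sym.f_nest_central[OF entries_identity mn]
    by (rule f_central_of_central_on_nests[of "Suc (Suc n)"])
  then have "tails_sum P v = 0" for P v
    by (rule tails_sum_central_image)
  then have "sc m (f (nest P v)) = 0" if "length P = Suc (Suc n)" for P v
    using nest_identityD[OF identity that] by simp
  then have "f (nest P v) = 0" if "length P = Suc (Suc n)" for P v
    using that m0 by simp
  then show ?thesis
    by (rule f_zero_of_zero_on_nests)
qed

lemma zero_of_nest_identity: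
  assumes "nest_identity m n" and "n \<ge> 1" and "m \<noteq> 0" and "m + of_nat n \<noteq> 0"
  shows "f u = 0"
proof (cases n)
  case (Suc n')
  then show ?thesis
  proof (cases n')
    case 0
    then show ?thesis using assms Suc arity_one_zero by simp
  next
    case (Suc r)
    then show ?thesis using assms \<open>n = Suc n'\<close> arity_ge_two_zero by blast
  qed
qed (use assms in simp)

end

lemma lie_alg_map_of_defs:
  assumes "lie_algebra sc br" and "perfect_lie sc br" and "Vector_Spaces.linear sc sc f"
  shows "lie_alg_map sc br f"
  using assms
  unfolding lie_alg_map_def lie_alg_map_axioms_def perfect_lie_alg_def
    perfect_lie_alg_axioms_def lie_alg_def lie_alg_axioms_def lie_algebra_def perfect_lie_def
  by auto

theorem lemma2:
  fixes sc :: "'k::field_char_0 \<Rightarrow> 'v::ab_group_add \<Rightarrow> 'v"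
    and br :: "'v \<Rightarrow> 'v \<Rightarrow> 'v"
    and f :: "'v \<Rightarrow> 'v"
    and k :: nat
    and m :: 'k
  assumes "alg_closed_field TYPE('k)"
    and "lie_algebra sc br"
    and "perfect_lie sc br"
    and "k \<ge> 2"
    and "m \<noteq> 0"
    and "\<forall>n::nat. m \<noteq> - of_nat (Suc n)"
    and "Vector_Spaces.linear sc sc f"
    and "\<forall>x :: nat \<Rightarrow> 'v.
           sc m (f (rnest br (map x [1..<k+1])))
           + (\<Sum>i\<in>{2..k}. rnest br (map x [1..<i] @ [f (rnest br (map x [i..<k+1]))])) = 0"
  shows "f = (\<lambda>_. 0)"
proof -
  interpret lie_alg_map sc br f
    using assms(2,3,7) by (rule lie_alg_map_of_defs)
  have identity: "nest_identity m (k - 1)"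
    using assms(8,4) by (rule nest_identity_of_hypothesis)
  have "Suc (k - 2) = k - 1"
    using assms(4) by simp
  then have "m + of_nat (k - 1) \<noteq> 0"
    using assms(6) by (metis add.commute add_eq_0_iff)
  then have "f u = 0" for u
    using identity assms(4,5) by (intro zero_of_nest_identity[of m "k - 1"]) auto
  then show ?thesis by blast
qed

end
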